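(* Assume (A1), (A2), (A3) and that $u_0:\mathbb{T}^d\to\mathbb{R}$ is Lipschitz continuous. Let $u\in C(\overline{Q_T})$ be a viscosity solution of $\partial_t^\alpha u+H(t,x,u,Du)=0$ in $Q_T$, $u(0,\cdot)=u_0$. Then there exists a constant $M>0$ depending only on $H$, $u_0$, $\alpha$ and $T$ such that $|u(t,x)-u_0(x)|\le Mt^\alpha$ for all $(t,x)\in\overline{Q_T}$.
   Context: Fix $d\ge1$, $T>0$, $\alpha\in(0,1)$. $\mathbb{T}^d=\mathbb{R}^d/\mathbb{Z}^d$; functions on $[0,T]\times\mathbb{T}^d$ are identified with functions on $[0,T]\times\mathbb{R}^d$ $\mathbb{Z}^d$-periodic in $x$. $Q_T=(0,T]\times\mathbb{T}^d$, $\overline{Q_T}=[0,T]\times\mathbb{T}^d$; $D$ spatial gradient; $\partial_t^\alpha$ Caputo's derivative $(\partial_t^\alpha f)(t)=\frac{1}{\Gamma(1-\alpha)}\int_0^t f'(s)(t-s)^{-\alpha}ds$. $H:\overline{Q_T}\times\mathbb{R}\times\mathbb{R}^d\to\mathbb{R}$. Assumptions: (A1) $H$ continuous. (A2) there is a modulus $\omega$ with $|H(t,x,r,p)-H(t,y,r,p)|\le\omega(|x-y|(1+|p|))$ for all $t\in[0,T]$, $x,y\in\mathbb{R}^d$, $r\in\mathbb{R}$, $p\in\mathbb{R}^d$. (A3) $r\mapsto H(t,x,r,p)$ nondecreasing. $\mathcal{C}^1([a,b]\times O)=\{\phi\in C^1((a,b]\times O)\cap C([a,b]\times O):\partial_t\phi(\cdot,x)\in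 L^1(a,b)\ \forall x\in O\}$. For measurable $f(t,x)$, $t\in(0,T]$, $r\in[0,t]$: $J_r[f](t,x)=\frac{\alpha}{\Gamma(1-\alpha)}\int_0^r (f(t,x)-f(t-\tau,x))\tau^{-\alpha-1}d\tau$, $K_r[f](t,x)=\frac{f(t,x)-f(0,x)}{t^\alpha\Gamma(1-\alpha)}+\frac{\alpha}{\Gamma(1-\alpha)}\int_r^t (f(t,x)-f(t-\tau,x))\tau^{-\alpha-1}d\tau$ (improper at lower limit $0$). Viscosity sub/supersolution: $u\in USC(\overline{Q_T})$ (resp. $LSC$) such that for all $a<b$ in $[0,T]$, every open ball $B\subset\mathbb{R}^d$, every $\phi\in\mathcal{C}^1([0,T]\times\mathbb{R}^d)$ and every $(\hat t,\hat x)\in(a,b]\times B$ where $u-\phi$ attains its maximum (resp. minimum) over $[a,b]\times\overline B$: $J_{\hat t-a}[\phi](\hat t,\hat x)+K_{\hat t-a}[u](\hat t,\hat x)+H(\hat t,\hat x,u(\hat t,\hat x),D\phi(\hat t,\hat x))\le0$ (resp. $\ge0$). A viscosity solution of the initial value problem is $u\in C(\overline{Q_T})$ that is both, with $u(0,\cdot)=u_0$. *)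

theory Defs
  imports "HOL-Analysis.Analysis"
begin

text \<open>Points of the d-dimensional space are vectors of type real^'n (d = CARD('n)).
Functions on [0,T] x T^d are functions on [0,T] x R^d that are Z^d-periodic in x.\<close>

definition int_vec :: "real^'n \<Rightarrow> bool" where
  "int_vec z \<longleftrightarrow> (\<forall>i. z $ i \<in> \<int>)"

definition periodic_x :: "(real \<Rightarrow> real^'n \<Rightarrow> real) \<Rightarrow> bool" where
  "periodic_x f \<longleftrightarrow> (\<forall>t x z. int_vec z \<longrightarrow> f t (x + z) = f t x)"

definition upper_semicont_on :: "('a::metric_space) set \<Rightarrow> ('a \<Rightarrow> real) \<Rightarrow> bool" where
  "upper_semicont_on S f \<longleftrightarrow>
     (\<forall>p\<in>S. \<forall>e>0. \<exists>\<delta>>0. \<forall>q\<in>S. dist q p < \<delta> \<longrightarrow> f q < f p + e)"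

definition lower_semicont_on :: "('a::metric_space) set \<Rightarrow> ('a \<Rightarrow> real) \<Rightarrow> bool" where
  "lower_semicont_on S f \<longleftrightarrow>
     (\<forall>p\<in>S. \<forall>e>0. \<exists>\<delta>>0. \<forall>q\<in>S. dist q p < \<delta> \<longrightarrow> f p - e < f q)"

definition is_modulus :: "(real \<Rightarrow> real) \<Rightarrow> bool" where
  "is_modulus \<omega> \<longleftrightarrow> \<omega> 0 = 0 \<and> (\<forall>s\<ge>0. \<omega> s \<ge> 0) \<and> mono_on {0..} \<omega> \<and>
     (\<omega> \<longlongrightarrow> 0) (at_right 0)"

definition test_fun :: "real \<Rightarrow> (real \<Rightarrow> real^'n \<Rightarrow> real) \<Rightarrow> (real \<Rightarrow> real^'n \<Rightarrow> real)
    \<Rightarrow> (real \<Rightarrow> real^'n \<Rightarrow> real^'n) \<Rightarrow> bool" where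
  "test_fun T \<phi> \<phi>t D\<phi> \<longleftrightarrow>
     continuous_on ({0..T} \<times> UNIV) (\<lambda>(t,x). \<phi> t x) \<and>
     (\<forall>t\<in>{0<..T}. \<forall>x. ((\<lambda>(s,y). \<phi> s y) has_derivative (\<lambda>(h,k). h * \<phi>t t x + D\<phi> t x \<bullet> k))
         (at (t,x) within ({0<..T} \<times> UNIV))) \<and>
     continuous_on ({0<..T} \<times> UNIV) (\<lambda>(t,x). \<phi>t t x) \<and>
     continuous_on ({0<..T} \<times> UNIV) (\<lambda>(t,x). D\<phi> t x) \<and>
     (\<forall>x. (\<lambda>t. \<phi>t t x) absolutely_integrable_on {0..T})"

definition Jop :: "real \<Rightarrow> real \<Rightarrow> (real \<Rightarrow> real^'n \<Rightarrow> real) \<Rightarrow> real \<Rightarrow> real^'n \<Rightarrow> real" where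
  "Jop \<alpha> r f t x = \<alpha> / Gamma (1 - \<alpha>) *
     integral {0..r} (\<lambda>\<tau>. (f t x - f (t - \<tau>) x) * \<tau> powr (- \<alpha> - 1))"

definition Kop :: "real \<Rightarrow> real \<Rightarrow> (real \<Rightarrow> real^'n \<Rightarrow> real) \<Rightarrow> real \<Rightarrow> real^'n \<Rightarrow> real" where
  "Kop \<alpha> r f t x = (f t x - f 0 x) / (t powr \<alpha> * Gamma (1 - \<alpha>)) +
     \<alpha> / Gamma (1 - \<alpha>) * integral {r..t} (\<lambda>\<tau>. (f t x - f (t - \<tau>) x) * \<tau> powr (- \<alpha> - 1))"

type_synonym 'n hamiltonian = "real \<Rightarrow> real^'n \<Rightarrow> real \<Rightarrow> real^'n \<Rightarrow> real"

definition visc_subsol :: "real \<Rightarrow> real \<Rightarrow> 'n hamiltonian \<Rightarrow> (real \<Rightarrow> real^'n \<Rightarrow> real) \<Rightarrow> bool" where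
  "visc_subsol \<alpha> T H u \<longleftrightarrow>
     periodic_x u \<and> upper_semicont_on ({0..T} \<times> UNIV) (\<lambda>(t,x). u t x) \<and>
     (\<forall>a b c \<rho> \<phi> \<phi>t D\<phi> th xh.
        0 \<le> a \<and> a < b \<and> b \<le> T \<and> test_fun T \<phi> \<phi>t D\<phi> \<and>
        th \<in> {a<..b} \<and> xh \<in> ball c \<rho> \<and>
        (\<forall>s\<in>{a..b}. \<forall>y\<in>closure (ball c \<rho>). u s y - \<phi> s y \<le> u th xh - \<phi> th xh)
        \<longrightarrow> Jop \<alpha> (th - a) \<phi> th xh + Kop \<alpha> (th - a) u th xh + H th xh (u th xh) (D\<phi> th xh) \<le> 0)"

definition visc_supersol :: "real \<Rightarrow> real \<Rightarrow> 'n hamiltonian \<Rightarrow> (real \<Rightarrow> real^'n \<Rightarrow> real) \<Rightarrow> bool" where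
  "visc_supersol \<alpha> T H u \<longleftrightarrow>
     periodic_x u \<and> lower_semicont_on ({0..T} \<times> UNIV) (\<lambda>(t,x). u t x) \<and>
     (\<forall>a b c \<rho> \<phi> \<phi>t D\<phi> th xh.
        0 \<le> a \<and> a < b \<and> b \<le> T \<and> test_fun T \<phi> \<phi>t D\<phi> \<and>
        th \<in> {a<..b} \<and> xh \<in> ball c \<rho> \<and>
        (\<forall>s\<in>{a..b}. \<forall>y\<in>closure (ball c \<rho>). u s y - \<phi> s y \<ge> u th xh - \<phi> th xh)
        \<longrightarrow> Jop \<alpha> (th - a) \<phi> th xh + Kop \<alpha> (th - a) u th xh + H th xh (u th xh) (D\<phi> th xh) \<ge> 0)"

definition visc_sol :: "real \<Rightarrow> real \<Rightarrow> 'n hamiltonian \<Rightarrow> (real^'n \<Rightarrow> real) \<Rightarrow> (real \<Rightarrow> real^'n \<Rightarrow> real) \<Rightarrow> bool" where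
  "visc_sol \<alpha> T H u0 u \<longleftrightarrow>
     continuous_on ({0..T} \<times> UNIV) (\<lambda>(t,x). u t x) \<and>
     visc_subsol \<alpha> T H u \<and> visc_supersol \<alpha> T H u \<and> (\<forall>x. u 0 x = u0 x)"

end

theory Submission
  imports Defs
begin

text \<open>Suppose \<open>u(t,x) - u\<^sub>0(x) > M t\<^sup>\<alpha>\<close> somewhere, with \<open>M > C \<Gamma>(1-\<alpha>)\<close>, where \<open>-C\<close> bounds
  \<open>H\<close> from below on the relevant range (periodicity and continuity make that range compact, and
  monotonicity in \<open>r\<close> extends the bound to all larger \<open>r\<close>). Subtract the barrier
  \<open>u\<^sub>0(x\<^sub>0) + L\<surd>(|x - x\<^sub>0|\<^sup>2 + \<eta>\<^sup>2) + M t\<^sup>\<alpha>\<close>: the difference has a positive maximum, which lies in a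
  ball since \<open>u\<close> is bounded and at a positive time since \<open>u\<^sub>0\<close> is \<open>L\<close>-Lipschitz. There the
  subsolution inequality with \<open>a = 0\<close> applies; \<open>J\<close> is nonnegative because the barrier increases in
  time and \<open>K\<close> is the quotient \<open>(u(t) - u\<^sub>0)/(t\<^sup>\<alpha>\<Gamma>(1-\<alpha>))\<close>, so \<open>u - u\<^sub>0 \<le> C \<Gamma>(1-\<alpha>) t\<^sup>\<alpha>\<close> at that
  point, contradicting the choice of \<open>M\<close>. The lower bound is the same argument for \<open>-u\<close>,
  a subsolution for \<open>-H(t,x,-r,-p)\<close>.\<close>

definition smooth_dist :: "real \<Rightarrow> real^'n \<Rightarrow> real^'n \<Rightarrow> real" where
  "smooth_dist \<eta> x0 x = sqrt ((x - x0) \<bullet> (x - x0) + \<eta>\<^sup>2)"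

text \<open>The smoothed distance makes the barrier an admissible \<open>C\<^sup>1\<close> test function.\<close>
definition barrier :: "real \<Rightarrow> real \<Rightarrow> real \<Rightarrow> real^'n \<Rightarrow> real \<Rightarrow> real \<Rightarrow> real \<Rightarrow> real^'n \<Rightarrow> real" where
  "barrier \<alpha> L M x0 c0 \<eta> t x = c0 + L * smooth_dist \<eta> x0 x + M * t powr \<alpha>"

definition barrier_dt :: "real \<Rightarrow> real \<Rightarrow> real \<Rightarrow> real^'n \<Rightarrow> real" where
  "barrier_dt \<alpha> M t x = M * (\<alpha> * t powr (\<alpha> - 1))"

definition barrier_grad :: "real \<Rightarrow> real^'n \<Rightarrow> real \<Rightarrow> real \<Rightarrow> real^'n \<Rightarrow> real^'n" where
  "barrier_grad L x0 \<eta> t x = (L / smooth_dist \<eta> x0 x) *\<^sub>R (x - x0)"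

lemma smooth_dist_pos: "\<eta> > 0 \<Longrightarrow> smooth_dist \<eta> x0 x > 0"
  unfolding smooth_dist_def by (simp add: add_nonneg_pos)

lemma smooth_dist_center: "\<eta> \<ge> 0 \<Longrightarrow> smooth_dist \<eta> x0 x0 = \<eta>"
  unfolding smooth_dist_def by simp

lemma norm_le_smooth_dist: "norm (x - x0) \<le> smooth_dist \<eta> x0 x"
  unfolding smooth_dist_def norm_eq_sqrt_inner by (rule real_sqrt_le_mono) simp

lemma lipschitz_le_smooth_dist:
  assumes "\<forall>x y. \<bar>g x - g y\<bar> \<le> L * norm (x - y)" and "L \<ge> 0"
  shows "g x \<le> g x0 + L * smooth_dist \<eta> x0 x"
proof -
  have "g x - g x0 \<le> L * norm (x - x0)" using assms(1) by (metis abs_le_D1)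
  also have "\<dots> \<le> L * smooth_dist \<eta> x0 x" by (rule mult_left_mono[OF norm_le_smooth_dist assms(2)])
  finally show ?thesis by simp
qed

lemma norm_barrier_grad_le: "L \<ge> 0 \<Longrightarrow> \<eta> > 0 \<Longrightarrow> norm (barrier_grad L x0 \<eta> t x) \<le> L"
  using smooth_dist_pos[of \<eta> x0 x] norm_le_smooth_dist[of x x0 \<eta>]
  by (simp add: barrier_grad_def divide_le_eq mult.commute mult_left_mono)

lemma visc_subsolD:
  assumes "visc_subsol \<alpha> T H u" and "0 \<le> a" "a < b" "b \<le> T" and "test_fun T \<phi> \<phi>t D\<phi>"
    and "th \<in> {a<..b}" "xh \<in> ball c \<rho>"
    and "\<forall>s\<in>{a..b}. \<forall>y\<in>closure (ball c \<rho>). u s y - \<phi> s y \<le> u th xh - \<phi> th xh"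
  shows "Jop \<alpha> (th - a) \<phi> th xh + Kop \<alpha> (th - a) u th xh + H th xh (u th xh) (D\<phi> th xh) \<le> 0"
  using assms unfolding visc_subsol_def by blast

lemma visc_supersolD:
  assumes "visc_supersol \<alpha> T H u" and "0 \<le> a" "a < b" "b \<le> T" and "test_fun T \<phi> \<phi>t D\<phi>"
    and "th \<in> {a<..b}" "xh \<in> ball c \<rho>"
    and "\<forall>s\<in>{a..b}. \<forall>y\<in>closure (ball c \<rho>). u s y - \<phi> s y \<ge> u th xh - \<phi> th xh"
  shows "Jop \<alpha> (th - a) \<phi> th xh + Kop \<alpha> (th - a) u th xh + H th xh (u th xh) (D\<phi> th xh) \<ge> 0"
  using assms unfolding visc_supersol_def by blast

lemma test_fun_barrier:
  fixes x0 :: "real^'n"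
  assumes "0 < \<alpha>" "\<alpha> < 1" and "\<eta> > 0"
  shows "test_fun T (barrier \<alpha> L M x0 c0 \<eta>) (barrier_dt \<alpha> M) (barrier_grad L x0 \<eta>)"
  unfolding test_fun_def
proof (intro conjI ballI allI)
  show "continuous_on ({0..T} \<times> UNIV) (\<lambda>(t,x). barrier \<alpha> L M x0 c0 \<eta> t x)"
    using assms(1) unfolding barrier_def smooth_dist_def split_beta
    by (auto intro!: continuous_intros continuous_on_powr')
  show "continuous_on ({0<..T} \<times> UNIV) (\<lambda>(t,x). barrier_dt \<alpha> M t x)"
    unfolding barrier_dt_def split_beta by (auto intro!: continuous_intros)
  show "continuous_on ({0<..T} \<times> UNIV) (\<lambda>(t,x). barrier_grad L x0 \<eta> t x)"
    using assms(3) unfolding barrier_grad_def smooth_dist_def split_beta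
    by (auto intro!: continuous_intros simp: add_nonneg_eq_0_iff)
  fix x :: "real^'n"
  have "(\<lambda>t. t powr (\<alpha> - 1)) integrable_on {0..T}"
    using has_integral_powr_from_0[of "\<alpha> - 1" T] assms(1) by (cases "T \<ge> 0") (auto simp: integrable_on_def)
  then have "(\<lambda>t. t powr (\<alpha> - 1)) absolutely_integrable_on {0..T}"
    by (rule nonnegative_absolutely_integrable_1) auto
  then show "(\<lambda>t. barrier_dt \<alpha> M t x) absolutely_integrable_on {0..T}"
    using absolutely_integrable_scaleR_left[of _ _ "M * \<alpha>"] by (simp add: barrier_dt_def mult.assoc)
next
  fix t x assume "t \<in> {0<..T}"
  then show "((\<lambda>(s,y). barrier \<alpha> L M x0 c0 \<eta> s y) has_derivative
      (\<lambda>(h,k). h * barrier_dt \<alpha> M t x + barrier_grad L x0 \<eta> t x \<bullet> k)) (at (t,x) within ({0<..T} \<times> UNIV))"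
    using assms(3) unfolding barrier_def barrier_dt_def barrier_grad_def smooth_dist_def split_beta
    by (auto intro!: derivative_eq_intros simp: add_nonneg_pos)
      (auto simp: fun_eq_iff inner_commute powr_diff field_simps)
qed

lemma test_fun_uminus:
  assumes "test_fun T \<phi> \<phi>t D\<phi>"
  shows "test_fun T (\<lambda>t x. - \<phi> t x) (\<lambda>t x. - \<phi>t t x) (\<lambda>t x. - D\<phi> t x)"
  unfolding test_fun_def
proof (intro conjI ballI allI)
  have c: "continuous_on ({0..T} \<times> UNIV) (\<lambda>(t,x). \<phi> t x)"
    "continuous_on ({0<..T} \<times> UNIV) (\<lambda>(t,x). \<phi>t t x)"
    "continuous_on ({0<..T} \<times> UNIV) (\<lambda>(t,x). D\<phi> t x)"
    using assms unfolding test_fun_def by blast+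
  show "continuous_on ({0..T} \<times> UNIV) (\<lambda>(t,x). - \<phi> t x)"
    using continuous_on_minus[OF c(1)] by (simp add: split_beta)
  show "continuous_on ({0<..T} \<times> UNIV) (\<lambda>(t,x). - \<phi>t t x)"
    using continuous_on_minus[OF c(2)] by (simp add: split_beta)
  show "continuous_on ({0<..T} \<times> UNIV) (\<lambda>(t,x). - D\<phi> t x)"
    using continuous_on_minus[OF c(3)] by (simp add: split_beta)
  fix x
  show "(\<lambda>t. - \<phi>t t x) absolutely_integrable_on {0..T}"
    using assms absolutely_integrable_scaleR_left[where f = "\<lambda>t. \<phi>t t x" and c = "-1"]
    unfolding test_fun_def by simp
next
  fix t x assume "t \<in> {0<..T}"
  then have "((\<lambda>(s,y). \<phi> s y) has_derivative (\<lambda>(h,k). h * \<phi>t t x + D\<phi> t x \<bullet> k))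
      (at (t,x) within {0<..T} \<times> UNIV)"
    using assms unfolding test_fun_def by blast
  from has_derivative_minus[OF this]
  show "((\<lambda>(s,y). - \<phi> s y) has_derivative (\<lambda>(h,k). h * - \<phi>t t x + - D\<phi> t x \<bullet> k))
      (at (t,x) within {0<..T} \<times> UNIV)"
    by (simp add: split_beta case_prod_beta')
qed

lemma Jop_uminus: "Jop \<alpha> r (\<lambda>s y. - f s y) t x = - Jop \<alpha> r f t x"
proof -
  have "(\<lambda>\<tau>. (- f t x - - f (t - \<tau>) x) * \<tau> powr (- \<alpha> - 1))
      = (\<lambda>\<tau>. - ((f t x - f (t - \<tau>) x) * \<tau> powr (- \<alpha> - 1)))"
    by (simp add: fun_eq_iff left_diff_distrib)
  then show ?thesis unfolding Jop_def by simp
qed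

lemma Kop_uminus: "Kop \<alpha> r (\<lambda>s y. - f s y) t x = - Kop \<alpha> r f t x"
proof -
  have "(\<lambda>\<tau>. (- f t x - - f (t - \<tau>) x) * \<tau> powr (- \<alpha> - 1))
      = (\<lambda>\<tau>. - ((f t x - f (t - \<tau>) x) * \<tau> powr (- \<alpha> - 1)))"
    by (simp add: fun_eq_iff left_diff_distrib)
  then show ?thesis unfolding Kop_def by (simp add: diff_divide_distrib)
qed

lemma Kop_self: "Kop \<alpha> t f t x = (f t x - f 0 x) / (t powr \<alpha> * Gamma (1 - \<alpha>))"
  unfolding Kop_def by simp

lemma Jop_nonneg:
  assumes "0 < \<alpha>" "\<alpha> < 1" and "\<forall>\<tau>\<in>{0..r}. f (t - \<tau>) x \<le> f t x"
  shows "0 \<le> Jop \<alpha> r f t x"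
proof -
  let ?g = "\<lambda>\<tau>. (f t x - f (t - \<tau>) x) * \<tau> powr (- \<alpha> - 1)"
  have "0 \<le> integral {0..r} ?g"
  proof (cases "?g integrable_on {0..r}")
    case True
    then show ?thesis by (rule integral_nonneg) (use assms(3) in auto)
  qed (simp add: not_integrable_integral)
  then show ?thesis using assms(1,2) by (simp add: Jop_def)
qed

lemma visc_supersol_uminus:
  assumes "visc_supersol \<alpha> T H u"
  shows "visc_subsol \<alpha> T (\<lambda>t x r p. - H t x (- r) (- p)) (\<lambda>t x. - u t x)"
  unfolding visc_subsol_def
proof (intro conjI allI impI)
  show "periodic_x (\<lambda>t x. - u t x)"
    using assms by (simp add: visc_supersol_def periodic_x_def)
  have "lower_semicont_on ({0..T} \<times> UNIV) (\<lambda>(t,x). u t x)"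
    using assms unfolding visc_supersol_def by blast
  then show "upper_semicont_on ({0..T} \<times> UNIV) (\<lambda>(t,x). - u t x)"
    unfolding lower_semicont_on_def upper_semicont_on_def split_beta by force
next
  fix a b c \<rho> \<phi> \<phi>t D\<phi> th xh
  assume "0 \<le> a \<and> a < b \<and> b \<le> T \<and> test_fun T \<phi> \<phi>t D\<phi> \<and> th \<in> {a<..b} \<and> xh \<in> ball c \<rho> \<and>
    (\<forall>s\<in>{a..b}. \<forall>y\<in>closure (ball c \<rho>). - u s y - \<phi> s y \<le> - u th xh - \<phi> th xh)"
  then have "Jop \<alpha> (th - a) (\<lambda>t x. - \<phi> t x) th xh + Kop \<alpha> (th - a) u th xh
      + H th xh (u th xh) (- D\<phi> th xh) \<ge> 0"
    using visc_supersolD[OF assms _ _ _ test_fun_uminus[of T \<phi> \<phi>t D\<phi>], where a = a and b = b and c = c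
        and \<rho> = \<rho> and th = th and xh = xh]
    by (fastforce simp: algebra_simps)
  then show "Jop \<alpha> (th - a) \<phi> th xh + Kop \<alpha> (th - a) (\<lambda>t x. - u t x) th xh
      + - H th xh (- (- u th xh)) (- D\<phi> th xh) \<le> 0"
    by (simp add: Jop_uminus Kop_uminus)
qed

lemma int_vec_floor_reduce: "\<exists>z. int_vec z \<and> (x::real^'n) - z \<in> cbox 0 (\<chi> i. 1)"
proof (intro exI conjI)
  show "int_vec (\<chi> i. of_int \<lfloor>x $ i\<rfloor> :: real^'n)" unfolding int_vec_def by simp
  show "x - (\<chi> i. of_int \<lfloor>x $ i\<rfloor>) \<in> cbox 0 (\<chi> i. 1)"
    unfolding mem_box_cart
    by (simp add: of_int_floor_le) (metis frac_def frac_lt_1 less_imp_le)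
qed

lemma periodic_continuous_bounded:
  fixes f :: "'a::topological_space \<Rightarrow> real^'n \<Rightarrow> real"
  assumes "compact K" and "continuous_on (K \<times> UNIV) (\<lambda>(y,x). f y x)"
    and "\<forall>y x z. int_vec z \<longrightarrow> f y (x + z) = f y x"
  obtains B where "\<forall>y\<in>K. \<forall>x. \<bar>f y x\<bar> \<le> B"
proof -
  let ?Q = "cbox (0::real^'n) (\<chi> i. 1)"
  have "compact ((\<lambda>(y,x). f y x) ` (K \<times> ?Q))"
    by (intro compact_continuous_image continuous_on_subset[OF assms(2)] compact_Times assms(1)) auto
  then obtain B where B: "\<forall>w\<in>K \<times> ?Q. \<bar>(\<lambda>(y,x). f y x) w\<bar> \<le> B"
    unfolding bounded_iff[symmetric] by (auto dest!: compact_imp_bounded simp: bounded_iff)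
  have "\<bar>f y x\<bar> \<le> B" if "y \<in> K" for y x
  proof -
    obtain z where "int_vec z" "x - z \<in> ?Q" using int_vec_floor_reduce by blast
    then show ?thesis using B that assms(3) by (metis (no_types, lifting) case_prod_conv diff_add_cancel mem_Sigma_iff)
  qed
  then show ?thesis using that by blast
qed

lemma continuous_attains_max_in_ball:
  fixes f :: "'a::topological_space \<Rightarrow> 'b::heine_borel \<Rightarrow> real"
  assumes "compact S" and "continuous_on (S \<times> UNIV) (\<lambda>(s,y). f s y)" and "t0 \<in> S"
    and far: "\<And>s y. s \<in> S \<Longrightarrow> R \<le> dist x0 y \<Longrightarrow> f s y < f t0 x0"
  obtains th xh where "th \<in> S" "xh \<in> ball x0 R"
    "\<forall>s\<in>S. \<forall>y\<in>cball x0 R. f s y \<le> f th xh" "f t0 x0 \<le> f th xh"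
proof -
  have "0 < R" using far[OF \<open>t0 \<in> S\<close>, of x0] by force
  then have start: "(t0, x0) \<in> S \<times> cball x0 R" using \<open>t0 \<in> S\<close> by simp
  moreover have "compact (S \<times> cball x0 R)" by (simp add: assms(1) compact_Times)
  moreover have "continuous_on (S \<times> cball x0 R) (\<lambda>(s,y). f s y)"
    by (rule continuous_on_subset[OF assms(2)]) auto
  ultimately obtain th xh where th: "th \<in> S" and "xh \<in> cball x0 R"
    and max: "\<forall>(s,y)\<in>S \<times> cball x0 R. f s y \<le> f th xh"
    using continuous_attains_sup[of "S \<times> cball x0 R" "\<lambda>(s,y). f s y"] by fastforce
  have above: "f t0 x0 \<le> f th xh" using max start by blast
  have "xh \<in> ball x0 R"
  proof (rule ccontr)
    assume "xh \<notin> ball x0 R"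
    then have "f th xh < f t0 x0" using far th by (simp add: not_less)
    then show False using above by simp
  qed
  then show ?thesis using that th above max by auto
qed

lemma visc_subsol_barrier_max_growth:
  assumes "0 < \<alpha>" "\<alpha> < 1" and "visc_subsol \<alpha> T H u" and "0 \<le> M" "\<eta> > 0" "L \<ge> 0"
    and "th \<in> {0<..T}" "xh \<in> ball x0 R"
    and "\<forall>s\<in>{0..T}. \<forall>y\<in>cball x0 R.
      u s y - barrier \<alpha> L M x0 c0 \<eta> s y \<le> u th xh - barrier \<alpha> L M x0 c0 \<eta> th xh"
    and "m \<le> u th xh" and H_ge: "\<forall>t\<in>{0..T}. \<forall>x r p. m \<le> r \<longrightarrow> norm p \<le> L \<longrightarrow> - C \<le> H t x r p"
  shows "u th xh - u 0 xh \<le> C * Gamma (1 - \<alpha>) * th powr \<alpha>"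
proof -
  have "R > 0" using \<open>xh \<in> ball x0 R\<close> by (metis dist_not_less_zero less_le_trans mem_ball not_le)
  then have "Jop \<alpha> (th - 0) (barrier \<alpha> L M x0 c0 \<eta>) th xh + Kop \<alpha> (th - 0) u th xh
      + H th xh (u th xh) (barrier_grad L x0 \<eta> th xh) \<le> 0"
    using assms(7-9) visc_subsolD[OF assms(3) _ _ _ test_fun_barrier[OF assms(1,2,5)], where a = 0 and b = T]
    by (simp add: closure_ball)
  moreover have "0 \<le> Jop \<alpha> th (barrier \<alpha> L M x0 c0 \<eta>) th xh"
    using assms(1,2,4,7) by (intro Jop_nonneg) (auto simp: barrier_def intro!: mult_left_mono powr_mono2)
  moreover have "- C \<le> H th xh (u th xh) (barrier_grad L x0 \<eta> th xh)"
    using H_ge assms(7,10) norm_barrier_grad_le[OF assms(6,5), of x0 th xh] by fastforce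
  ultimately have "(u th xh - u 0 xh) / (th powr \<alpha> * Gamma (1 - \<alpha>)) \<le> C"
    by (simp add: Kop_self)
  moreover have "0 < th powr \<alpha> * Gamma (1 - \<alpha>)" using assms(2,7) by simp
  ultimately show ?thesis by (simp add: divide_le_eq mult_ac)
qed

lemma visc_subsol_growth_bound:
  fixes u :: "real \<Rightarrow> real^'n \<Rightarrow> real"
  assumes "0 < \<alpha>" "\<alpha> < 1" and sub: "visc_subsol \<alpha> T H u"
    and cont: "continuous_on ({0..T} \<times> UNIV) (\<lambda>(t,x). u t x)"
    and "L > 0" and lip: "\<forall>x y. \<bar>u 0 x - u 0 y\<bar> \<le> L * norm (x - y)"
    and init_ge: "\<forall>x. m \<le> u 0 x"
    and H_ge: "\<forall>t\<in>{0..T}. \<forall>x r p. m \<le> r \<longrightarrow> norm p \<le> L \<longrightarrow> - C \<le> H t x r p"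
    and M: "C * Gamma (1 - \<alpha>) \<le> M" "0 \<le> M"
    and t: "t \<in> {0..T}"
  shows "u t x - u 0 x \<le> M * t powr \<alpha>"
proof (rule ccontr)
  define \<delta> where "\<delta> = u t x - u 0 x - M * t powr \<alpha>"
  assume "\<not> ?thesis"
  then have "\<delta> > 0" by (simp add: \<delta>_def)
  define \<eta> where "\<eta> = \<delta> / (2 * L)"
  have "\<eta> > 0" and L\<eta>: "L * \<eta> = \<delta> / 2"
    using \<open>\<delta> > 0\<close> \<open>L > 0\<close> by (simp_all add: \<eta>_def)
  define \<phi> where "\<phi> = barrier \<alpha> L M x (u 0 x) \<eta>"
  have \<phi>_ge: "u 0 x + L * norm (y - x) \<le> \<phi> s y" if "0 \<le> s" for s y
    using M(2) \<open>L > 0\<close> mult_left_mono[OF norm_le_smooth_dist[of y x \<eta>], of L]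
    by (simp add: \<phi>_def barrier_def add_increasing2)
  have \<phi>_lip: "u 0 y \<le> \<phi> s y - M * s powr \<alpha>" for s y
    using lipschitz_le_smooth_dist[OF lip] \<open>L > 0\<close> by (simp add: \<phi>_def barrier_def)
  have at_start: "u t x - \<phi> t x = \<delta> / 2"
    using \<open>\<eta> > 0\<close> L\<eta> by (simp add: \<phi>_def barrier_def smooth_dist_center \<delta>_def)
  obtain B where B: "\<forall>s\<in>{0..T}. \<forall>y. \<bar>u s y\<bar> \<le> B"
    using periodic_continuous_bounded[OF compact_Icc cont] sub
    by (auto simp: visc_subsol_def periodic_x_def)
  define R where "R = (\<bar>B\<bar> + \<bar>u 0 x\<bar> + 1) / L"
  have far: "u s y - \<phi> s y < u t x - \<phi> t x" if "s \<in> {0..T}" "R \<le> dist x y" for s y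
  proof -
    have "\<bar>B\<bar> + \<bar>u 0 x\<bar> + 1 \<le> L * norm (y - x)"
      using that(2) \<open>L > 0\<close> by (simp add: R_def dist_norm norm_minus_commute divide_le_eq mult.commute)
    moreover have "u s y \<le> B" using B that(1) abs_le_D1 by blast
    ultimately show ?thesis
      using \<phi>_ge[of s y] that(1) at_start \<open>\<delta> > 0\<close> abs_ge_self[of B] abs_ge_minus_self[of "u 0 x"]
      by simp
  qed
  have "continuous_on ({0..T} \<times> UNIV) (\<lambda>(s,y). \<phi> s y)"
    using test_fun_barrier[OF assms(1,2) \<open>\<eta> > 0\<close>, of T L M x "u 0 x"]
    unfolding \<phi>_def test_fun_def by blast
  then have "continuous_on ({0..T} \<times> UNIV) (\<lambda>(s,y). u s y - \<phi> s y)"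
    using continuous_on_diff[OF cont] by (simp add: split_beta)
  from continuous_attains_max_in_ball[OF compact_Icc this t far]
  obtain th xh where th: "th \<in> {0..T}" and xh: "xh \<in> ball x R"
    and max: "\<forall>s\<in>{0..T}. \<forall>y\<in>cball x R. u s y - \<phi> s y \<le> u th xh - \<phi> th xh"
    and above: "\<delta> / 2 \<le> u th xh - \<phi> th xh"
    unfolding at_start by blast
  have "th \<noteq> 0" using \<phi>_lip[of xh 0] above \<open>\<delta> > 0\<close> by auto
  have "0 \<le> L * norm (xh - x)" using \<open>L > 0\<close> by simp
  then have "m \<le> u th xh"
    using init_ge[rule_format, of x] \<phi>_ge[of th xh] above \<open>\<delta> > 0\<close> th by simp
  with \<open>th \<noteq> 0\<close> th have "u th xh - u 0 xh \<le> C * Gamma (1 - \<alpha>) * th powr \<alpha>"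
    using visc_subsol_barrier_max_growth[OF assms(1,2) sub M(2) \<open>\<eta> > 0\<close> _ _ xh _ _ H_ge] \<open>L > 0\<close> max
    by (simp add: \<phi>_def)
  also have "\<dots> \<le> M * th powr \<alpha>" using M(1) by (simp add: mult_right_mono)
  finally show False using \<phi>_lip[of xh th] above \<open>\<delta> > 0\<close> by linarith
qed

lemma monotone_hamiltonian_bounds:
  fixes H :: "'n::finite hamiltonian"
  assumes "0 \<le> m"
    and H_per: "\<forall>t x r p z. int_vec z \<longrightarrow> H t (x + z) r p = H t x r p"
    and cont: "continuous_on ({0..T} \<times> UNIV \<times> UNIV \<times> UNIV) (\<lambda>(t,x,r,p). H t x r p)"
    and mono: "\<forall>t\<in>{0..T}. \<forall>x p. mono (\<lambda>r. H t x r p)"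
  obtains C where "\<forall>t\<in>{0..T}. \<forall>x r p. - m \<le> r \<longrightarrow> norm p \<le> L \<longrightarrow> - C \<le> H t x r p"
    and "\<forall>t\<in>{0..T}. \<forall>x r p. - m \<le> r \<longrightarrow> norm p \<le> L \<longrightarrow> - C \<le> - H t x (- r) (- p)"
proof -
  let ?K = "{0..T} \<times> {-m..m} \<times> cball (0::real^'n) L"
  have "continuous_on (?K \<times> UNIV) (\<lambda>z. (\<lambda>(t,x,r,p). H t x r p) ((\<lambda>((t,r,p),x). (t,x,r,p)) z))"
    by (rule continuous_on_compose2[OF cont]) (auto simp: split_beta intro!: continuous_intros)
  then have "continuous_on (?K \<times> UNIV) (\<lambda>((t,r,p),x). H t x r p)" by (simp add: split_beta)
  then obtain C where C: "\<forall>(t,r,p)\<in>?K. \<forall>x. \<bar>H t x r p\<bar> \<le> C"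
    using periodic_continuous_bounded[of ?K "\<lambda>(t,r,p) x. H t x r p"] H_per
    by (fastforce simp: compact_Times split_beta)
  show ?thesis
  proof (rule that; intro ballI allI impI)
    fix t x r and p :: "real^'n" assume t: "t \<in> {0..T}" and "- m \<le> r" and p: "norm p \<le> L"
    then have "H t x (- m) p \<le> H t x r p" and "H t x (- r) (- p) \<le> H t x m (- p)"
      using mono by (auto simp: mono_def)
    moreover have "\<bar>H t x (- m) p\<bar> \<le> C" and "\<bar>H t x m (- p)\<bar> \<le> C"
      using C t p \<open>0 \<le> m\<close> by auto
    ultimately show "- C \<le> H t x r p" and "- C \<le> - H t x (- r) (- p)" by linarith+
  qed
qed

lemma lipschitz_periodic_bounds:
  fixes f :: "real^'n \<Rightarrow> real"
  assumes "\<exists>L. \<forall>x y. \<bar>f x - f y\<bar> \<le> L * norm (x - y)" and "\<forall>x z. int_vec z \<longrightarrow> f (x + z) = f x"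
  obtains L B where "L > 0" "\<forall>x y. \<bar>f x - f y\<bar> \<le> L * norm (x - y)" "0 \<le> B" "\<forall>x. \<bar>f x\<bar> \<le> B"
proof -
  obtain L0 where L0: "\<forall>x y. \<bar>f x - f y\<bar> \<le> L0 * norm (x - y)" using assms(1) by blast
  define L where "L = \<bar>L0\<bar> + 1"
  have "L0 * norm (x - y) \<le> L * norm (x - y)" for x y :: "real^'n"
    by (rule mult_right_mono) (simp_all add: L_def)
  then have lip: "\<forall>x y. \<bar>f x - f y\<bar> \<le> L * norm (x - y)" using L0 by (meson order_trans)
  moreover have "L > 0" by (simp add: L_def)
  ultimately have "continuous_on UNIV f"
    by (intro lipschitz_on_continuous_on[of L] lipschitz_onI) (auto simp: dist_norm dist_real_def)
  then have "continuous_on ({0::real} \<times> UNIV) (\<lambda>(_,x). f x)"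
    by (auto simp: split_beta intro!: continuous_on_compose2[of UNIV f] continuous_intros)
  then obtain B where "\<forall>x. \<bar>f x\<bar> \<le> B"
    using periodic_continuous_bounded[of "{0::real}" "\<lambda>_. f"] assms(2) by auto
  moreover from this have "0 \<le> B" by (meson abs_ge_zero order_trans)
  ultimately show ?thesis using that \<open>L > 0\<close> lip by blast
qed

lemma visc_sol_growth_bound:
  assumes "0 < \<alpha>" "\<alpha> < 1" and sol: "visc_sol \<alpha> T H u0 u"
    and "L > 0" and lip: "\<forall>x y. \<bar>u0 x - u0 y\<bar> \<le> L * norm (x - y)" and bound: "\<forall>x. \<bar>u0 x\<bar> \<le> B"
    and H_ge: "\<forall>t\<in>{0..T}. \<forall>x r p. - B \<le> r \<longrightarrow> norm p \<le> L \<longrightarrow> - C \<le> H t x r p"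
    and H_neg_ge: "\<forall>t\<in>{0..T}. \<forall>x r p. - B \<le> r \<longrightarrow> norm p \<le> L \<longrightarrow> - C \<le> - H t x (- r) (- p)"
    and M: "C * Gamma (1 - \<alpha>) \<le> M" "0 \<le> M" and t: "t \<in> {0..T}"
  shows "\<bar>u t x - u0 x\<bar> \<le> M * t powr \<alpha>"
proof -
  have cont: "continuous_on ({0..T} \<times> UNIV) (\<lambda>(t,x). u t x)" and init: "\<forall>x. u 0 x = u0 x"
    and sub: "visc_subsol \<alpha> T H u" and sup: "visc_supersol \<alpha> T H u"
    using sol unfolding visc_sol_def by blast+
  have "continuous_on ({0..T} \<times> UNIV) (\<lambda>(t,x). - u t x)"
    using continuous_on_minus[OF cont] by (simp add: split_beta)
  moreover have lip_u: "\<forall>x y. \<bar>u 0 x - u 0 y\<bar> \<le> L * norm (x - y)"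
    and lip_neg_u: "\<forall>x y. \<bar>- u 0 x - - u 0 y\<bar> \<le> L * norm (x - y)"
    using lip init by (simp_all add: abs_minus_commute)
  moreover have "\<forall>x. - B \<le> u 0 x" and "\<forall>x. - B \<le> - u 0 x"
    using bound init by (auto simp: abs_le_iff minus_le_iff)
  ultimately have "u t x - u 0 x \<le> M * t powr \<alpha>" and "- u t x - - u 0 x \<le> M * t powr \<alpha>"
    using visc_subsol_growth_bound[OF assms(1,2) sub cont \<open>L > 0\<close> lip_u _ H_ge M t]
      visc_subsol_growth_bound[OF assms(1,2) visc_supersol_uminus[OF sup] _ \<open>L > 0\<close> lip_neg_u _ H_neg_ge M t]
    by auto
  then show ?thesis using init by (simp add: abs_le_iff)
qed

theorem lemma6p2:
  fixes H :: "'n::finite hamiltonian" and u0 :: "real^'n \<Rightarrow> real"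
    and \<alpha> T :: real
  assumes "0 < \<alpha>" "\<alpha> < 1" "T > 0"
    and H_per: "\<forall>t x r p z. int_vec z \<longrightarrow> H t (x + z) r p = H t x r p"
    and A1: "continuous_on ({0..T} \<times> UNIV \<times> UNIV \<times> UNIV) (\<lambda>(t,x,r,p). H t x r p)"
    and A2: "\<exists>\<omega>. is_modulus \<omega> \<and> (\<forall>t\<in>{0..T}. \<forall>x y r p.
               \<bar>H t x r p - H t y r p\<bar> \<le> \<omega> (norm (x - y) * (1 + norm p)))"
    and A3: "\<forall>t\<in>{0..T}. \<forall>x p. mono (\<lambda>r. H t x r p)"
    and u0_per: "\<forall>x z. int_vec z \<longrightarrow> u0 (x + z) = u0 x"
    and u0_lip: "\<exists>L. \<forall>x y. \<bar>u0 x - u0 y\<bar> \<le> L * norm (x - y)"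
  shows "\<exists>M>0. \<forall>u. visc_sol \<alpha> T H u0 u \<longrightarrow>
           (\<forall>t\<in>{0..T}. \<forall>x. \<bar>u t x - u0 x\<bar> \<le> M * t powr \<alpha>)"
proof -
  obtain L B where "L > 0" and lip: "\<forall>x y. \<bar>u0 x - u0 y\<bar> \<le> L * norm (x - y)"
    and "0 \<le> B" and bound: "\<forall>x. \<bar>u0 x\<bar> \<le> B"
    using lipschitz_periodic_bounds[OF u0_lip u0_per] by blast
  obtain C where H_ge: "\<forall>t\<in>{0..T}. \<forall>x r p. - B \<le> r \<longrightarrow> norm p \<le> L \<longrightarrow> - C \<le> H t x r p"
    and H_neg_ge: "\<forall>t\<in>{0..T}. \<forall>x r p. - B \<le> r \<longrightarrow> norm p \<le> L \<longrightarrow> - C \<le> - H t x (- r) (- p)"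
    using monotone_hamiltonian_bounds[OF \<open>0 \<le> B\<close> H_per A1 A3] by blast
  define M where "M = \<bar>C\<bar> * Gamma (1 - \<alpha>) + 1"
  have "0 < Gamma (1 - \<alpha>)" using assms(2) by simp
  then have "C * Gamma (1 - \<alpha>) \<le> \<bar>C\<bar> * Gamma (1 - \<alpha>)" by (simp add: mult_right_mono)
  then have M: "C * Gamma (1 - \<alpha>) \<le> M" "0 < M"
    using \<open>0 < Gamma (1 - \<alpha>)\<close> unfolding M_def by (linarith, simp add: add_nonneg_pos)
  then show ?thesis
    using visc_sol_growth_bound[OF assms(1,2) _ \<open>L > 0\<close> lip bound H_ge H_neg_ge M(1) less_imp_le[OF M(2)]]
    by blast
qed

end
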